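(* Let $\Lambda:\mathbb{R}\to[0,1]$ be decreasing. The map $\mathrm{ES}_\Lambda:L^1\to\overline{\mathbb{R}}$ satisfies $$-\infty<\mathbb E[X]\le\mathrm{ES}_\Lambda(X)\le\mathrm{ES}_1(X),\quad X\in L^1.$$ In particular, for $X\in L^1$, $\mathrm{ES}_\Lambda(X)$ is finite if and only if $\mathrm{VaR}_1(X)<\infty$ or $\Lambda$ is not constantly $1$.
   Context: $(\Omega,\mathcal F,\mathbb P)$ is an atomless probability space, $L^0$ all random variables, $L^1$ integrable ones; $\overline{\mathbb{R}}=[-\infty,\infty]$; "decreasing" is weak; $\wedge=\min$. For $\alpha\in[0,1]$, $X\in L^0$: $\mathrm{VaR}_\alpha(X)=\inf\{x\in\mathbb{R}:\mathbb P(X\le x)\ge\alpha\}$ (so $\mathrm{VaR}_1(X)$ is the essential supremum, possibly $\infty$). For $X\in L^1$: $\mathrm{ES}_\alpha(X)=\frac{1}{1-\alpha}\int_\alpha^1\mathrm{VaR}_\beta(X)\,\mathrm d\beta$ for $\alpha\in[0,1)$ and $\mathrm{ES}_1(X)=\mathrm{VaR}_1(X)$; for decreasing $\Lambda$, $\mathrm{ES}_\Lambda(X)=\sup_{x\in\mathbb{R}}\left(\mathrm{ES}_{\Lambda(x)}(X)\wedge x\right)$, $X\in L^1$. *)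

theory Defs
  imports "HOL-Probability.Probability"
begin

definition atomless :: "'a measure \<Rightarrow> bool" where
  "atomless M \<longleftrightarrow> (\<forall>A\<in>sets M. measure M A > 0 \<longrightarrow>
      (\<exists>B\<in>sets M. B \<subseteq> A \<and> 0 < measure M B \<and> measure M B < measure M A))"

text \<open>Value-at-Risk: VaR_alpha(X) = inf {x in R. P(X <= x) >= alpha}, valued in extended reals
  (inf of the empty set is +infinity).\<close>
definition VaR :: "'a measure \<Rightarrow> real \<Rightarrow> ('a \<Rightarrow> real) \<Rightarrow> ereal" where
  "VaR M \<alpha> X = Inf (ereal ` {x::real. measure M {\<omega> \<in> space M. X \<omega> \<le> x} \<ge> \<alpha>})"

text \<open>Expected Shortfall for integrable X: ES_alpha(X) = 1/(1-alpha) int_alpha^1 VaR_beta(X) d beta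
  for alpha < 1, and ES_1(X) = VaR_1(X). (For X in L^1, VaR_beta(X) is finite for beta in (0,1).)\<close>
definition ES :: "'a measure \<Rightarrow> real \<Rightarrow> ('a \<Rightarrow> real) \<Rightarrow> ereal" where
  "ES M \<alpha> X = (if \<alpha> = 1 then VaR M 1 X
     else ereal ((1 / (1 - \<alpha>)) * (LINT \<beta>:{\<alpha><..<1}|lborel. real_of_ereal (VaR M \<beta> X))))"

definition ES_Lambda :: "'a measure \<Rightarrow> (real \<Rightarrow> real) \<Rightarrow> ('a \<Rightarrow> real) \<Rightarrow> ereal" where
  "ES_Lambda M \<Lambda> X = (SUP x\<in>(UNIV::real set). min (ES M (\<Lambda> x) X) (ereal x))"

end

theory Submission
  imports Defs
begin

text \<open>For \<open>0 < \<beta> < 1\<close>, \<open>VaR\<^sub>\<beta>(X)\<close> is the quantile function of the law of \<open>X\<close>, and by the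
  quantile transform its integral over \<open>(0,1)\<close> is \<open>E[X]\<close>. Since the quantile function is
  increasing, its mean \<open>ES\<^sub>\<alpha>(X)\<close> over the upper tail \<open>(\<alpha>,1)\<close> lies between \<open>E[X] = ES\<^sub>0(X)\<close>
  and the essential supremum \<open>VaR\<^sub>1(X)\<close>, and it is bounded uniformly in \<open>\<alpha> \<in> [0,a]\<close> for every
  \<open>a < 1\<close>. If \<open>\<Lambda>(x\<^sub>0) < 1\<close>, the term at \<open>x\<close> of the
  supremum defining \<open>ES\<^sub>\<Lambda>(X)\<close> is at most \<open>x\<^sub>0\<close> for \<open>x \<le> x\<^sub>0\<close> and at most the uniform bound at
  level \<open>\<Lambda>(x\<^sub>0)\<close> for \<open>x > x\<^sub>0\<close>; if \<open>\<Lambda> = 1\<close> and \<open>VaR\<^sub>1(X) = \<infinity>\<close>, that term equals \<open>x\<close>.\<close>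

lemma set_integrable_const_bounded:
  fixes A :: "real set"
  assumes "bounded A" "A \<in> sets borel"
  shows "set_integrable lborel A (\<lambda>_. c :: real)"
  unfolding set_integrable_def
  using emeasure_bounded_finite[OF assms(1)] assms(2) by (intro integrable_indicator) auto

lemma set_integral_abs_mono_set:
  fixes f :: "'a \<Rightarrow> real"
  assumes "set_integrable M B f" "A \<subseteq> B" "A \<in> sets M"
  shows "(LINT x:A|M. \<bar>f x\<bar>) \<le> (LINT x:B|M. \<bar>f x\<bar>)"
proof -
  have "set_integrable M A (\<lambda>x. \<bar>f x\<bar>)" "set_integrable M B (\<lambda>x. \<bar>f x\<bar>)"
    using assms by (auto intro: set_integrable_abs set_integrable_subset)
  then show ?thesis
    using \<open>A \<subseteq> B\<close> unfolding set_lebesgue_integral_def set_integrable_def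
    by (intro integral_mono) (auto simp: indicator_def)
qed

lemma mean_le_upper_tail_mean:
  fixes f :: "real \<Rightarrow> real"
  assumes mono: "mono_on {0<..<1} f" and int: "set_integrable lborel {0<..<1} f"
    and "0 \<le> \<alpha>" "\<alpha> < 1"
  shows "(LINT \<beta>:{0<..<1}|lborel. f \<beta>) \<le> (LINT \<beta>:{\<alpha><..<1}|lborel. f \<beta>) / (1 - \<alpha>)"
proof (cases "\<alpha> = 0")
  case False
  then have "0 < \<alpha>" using \<open>0 \<le> \<alpha>\<close> by simp
  define S where "S = (LINT \<beta>:{\<alpha><..<1}|lborel. f \<beta>)"
  define T where "T = (LINT \<beta>:{0<..\<alpha>}|lborel. f \<beta>)"
  have int_T: "set_integrable lborel {0<..\<alpha>} f"
    by (rule set_integrable_subset[OF int]) (use \<open>\<alpha> < 1\<close> in auto)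
  have int_S: "set_integrable lborel {\<alpha><..<1} f"
    by (rule set_integrable_subset[OF int]) (use \<open>0 < \<alpha>\<close> in auto)
  have "{0<..<1} = {0<..\<alpha>} \<union> {\<alpha><..<1::real}"
    using \<open>0 < \<alpha>\<close> \<open>\<alpha> < 1\<close> by auto
  then have split: "(LINT \<beta>:{0<..<1}|lborel. f \<beta>) = T + S"
    unfolding T_def S_def by (simp add: set_integral_Un[OF ivl_disj_int_two(2) int_T int_S])
  have "T \<le> (LINT \<beta>:{0<..\<alpha>}|lborel. f \<alpha>)"
    unfolding T_def
    by (rule set_integral_mono[OF int_T set_integrable_const_bounded])
       (use \<open>\<alpha> < 1\<close> in \<open>auto intro: mono_onD[OF mono]\<close>)
  then have T: "T \<le> \<alpha> * f \<alpha>"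
    using \<open>0 < \<alpha>\<close> by (simp add: set_integral_const)
  have "(LINT \<beta>:{\<alpha><..<1}|lborel. f \<alpha>) \<le> S"
    unfolding S_def
    by (rule set_integral_mono[OF set_integrable_const_bounded int_S])
       (use \<open>0 < \<alpha>\<close> in \<open>auto intro: mono_onD[OF mono]\<close>)
  then have S: "(1 - \<alpha>) * f \<alpha> \<le> S"
    using \<open>\<alpha> < 1\<close> by (simp add: set_integral_const)
  have "(1 - \<alpha>) * (T + S) \<le> (1 - \<alpha>) * (\<alpha> * f \<alpha> + S)"
    using T \<open>\<alpha> < 1\<close> by (intro mult_left_mono) auto
  also have "\<dots> = \<alpha> * ((1 - \<alpha>) * f \<alpha>) + (1 - \<alpha>) * S"
    by (simp add: algebra_simps)
  also have "\<dots> \<le> \<alpha> * S + (1 - \<alpha>) * S"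
    using S \<open>0 < \<alpha>\<close> by (simp add: mult_left_mono)
  finally show ?thesis
    using split \<open>\<alpha> < 1\<close> unfolding S_def by (simp add: field_simps)
qed simp

lemma upper_tail_mean_le:
  fixes f :: "real \<Rightarrow> real"
  assumes "set_integrable lborel {\<alpha><..<1} f" "\<alpha> < 1" "\<And>\<beta>. \<beta> \<in> {\<alpha><..<1} \<Longrightarrow> f \<beta> \<le> x"
  shows "(LINT \<beta>:{\<alpha><..<1}|lborel. f \<beta>) / (1 - \<alpha>) \<le> x"
proof -
  have "(LINT \<beta>:{\<alpha><..<1}|lborel. f \<beta>) \<le> (LINT \<beta>:{\<alpha><..<1}|lborel. x)"
    by (rule set_integral_mono[OF assms(1) set_integrable_const_bounded]) (use assms(3) in auto)
  then show ?thesis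
    using \<open>\<alpha> < 1\<close> by (simp add: set_integral_const field_simps)
qed

lemma upper_tail_mean_le_abs_integral:
  fixes f :: "real \<Rightarrow> real"
  assumes int: "set_integrable lborel {0<..<1} f" and "0 \<le> c" "c \<le> a" "a < 1"
  shows "(LINT \<beta>:{c<..<1}|lborel. f \<beta>) / (1 - c) \<le> (LINT \<beta>:{0<..<1}|lborel. \<bar>f \<beta>\<bar>) / (1 - a)"
proof -
  define K where "K = (LINT \<beta>:{0<..<1}|lborel. \<bar>f \<beta>\<bar>)"
  have int_c: "set_integrable lborel {c<..<1} f"
    by (rule set_integrable_subset[OF int]) (use \<open>0 \<le> c\<close> in auto)
  have "0 \<le> K"
    unfolding K_def set_lebesgue_integral_def by (rule integral_nonneg_AE) auto
  have "(LINT \<beta>:{c<..<1}|lborel. f \<beta>) \<le> (LINT \<beta>:{c<..<1}|lborel. \<bar>f \<beta>\<bar>)"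
    by (rule set_integral_mono[OF int_c set_integrable_abs[OF int_c]]) auto
  also have "\<dots> \<le> K"
    unfolding K_def by (rule set_integral_abs_mono_set[OF int]) (use \<open>0 \<le> c\<close> in auto)
  finally have "(LINT \<beta>:{c<..<1}|lborel. f \<beta>) \<le> K" .
  then have "(LINT \<beta>:{c<..<1}|lborel. f \<beta>) / (1 - c) \<le> K / (1 - c)"
    using assms by (intro divide_right_mono) auto
  also have "\<dots> \<le> K / (1 - a)"
    using \<open>0 \<le> K\<close> assms by (intro divide_left_mono) auto
  finally show ?thesis unfolding K_def .
qed

definition quantile :: "real measure \<Rightarrow> real \<Rightarrow> real" where
  "quantile D \<beta> = Inf {x. \<beta> \<le> cdf D x}"

context cdf_distribution
begin

lemma quantile_le_iff: "0 < \<beta> \<Longrightarrow> \<beta> < 1 \<Longrightarrow> quantile M \<beta> \<le> x \<longleftrightarrow> \<beta> \<le> cdf M x"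
  unfolding quantile_def by (rule pseudoinverse[symmetric])

lemma mono_on_quantile: "mono_on {0<..<1} (quantile M)"
  unfolding quantile_def[abs_def] by (rule mono_I)

lemma
  assumes "integrable M (\<lambda>x. x)"
  shows set_integrable_quantile: "set_integrable lborel {0<..<1} (quantile M)"
    and set_integral_quantile: "(LINT \<beta>:{0<..<1}|lborel. quantile M \<beta>) = (\<integral>x. x \<partial>M)"
proof -
  let ?U = "restrict_space lborel {0<..<1::real}"
  have law: "distr ?U borel (quantile M) = M"
    using distr_I_eq_M unfolding quantile_def[abs_def] .
  have meas: "quantile M \<in> borel_measurable ?U"
    using measurable_CI unfolding quantile_def[abs_def]
    by (simp add: measurable_def space_restrict_space sets_restrict_space)
  have "integrable ?U (quantile M)"
    using assms meas by (subst (asm) law[symmetric]) (simp add: integrable_distr_eq)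
  then show "set_integrable lborel {0<..<1} (quantile M)"
    by (simp add: set_integrable_eq)
  have "(\<integral>x. x \<partial>M) = integral\<^sup>L ?U (quantile M)"
    using meas by (subst law[symmetric]) (simp add: integral_distr)
  also have "\<dots> = (LINT \<beta>:{0<..<1}|lborel. quantile M \<beta>)"
    unfolding set_lebesgue_integral_def by (simp add: integral_restrict_space)
  finally show "(LINT \<beta>:{0<..<1}|lborel. quantile M \<beta>) = (\<integral>x. x \<partial>M)" ..
qed

end

lemma cdf_distr:
  "X \<in> borel_measurable M \<Longrightarrow> cdf (distr M borel X) x = measure M {\<omega> \<in> space M. X \<omega> \<le> x}"
  unfolding cdf_def2 by (subst measure_distr) (auto intro!: arg_cong2[where f=measure])

context prob_space
begin

lemma cdf_distribution_distr: "X \<in> borel_measurable M \<Longrightarrow> cdf_distribution (distr M borel X)"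
  unfolding cdf_distribution_def by simp

lemma VaR_eq_quantile:
  assumes "X \<in> borel_measurable M" "0 < \<beta>" "\<beta> < 1"
  shows "VaR M \<beta> X = ereal (quantile (distr M borel X) \<beta>)"
proof -
  have "{x. \<beta> \<le> measure M {\<omega> \<in> space M. X \<omega> \<le> x}} = {quantile (distr M borel X) \<beta>..}"
    using cdf_distribution.quantile_le_iff[OF cdf_distribution_distr[OF assms(1)] assms(2,3)]
    by (auto simp: cdf_distr[OF assms(1)])
  moreover have "Inf (ereal ` {a..}) = ereal a" for a
    by (rule antisym) (auto intro!: Inf_lower Inf_greatest)
  ultimately show ?thesis
    unfolding VaR_def by simp
qed

lemma ES_eq_upper_tail_mean:
  assumes "X \<in> borel_measurable M" "0 \<le> \<alpha>" "\<alpha> < 1"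
  shows "ES M \<alpha> X = ereal ((LINT \<beta>:{\<alpha><..<1}|lborel. quantile (distr M borel X) \<beta>) / (1 - \<alpha>))"
proof -
  have "(LINT \<beta>:{\<alpha><..<1}|lborel. real_of_ereal (VaR M \<beta> X))
      = (LINT \<beta>:{\<alpha><..<1}|lborel. quantile (distr M borel X) \<beta>)"
    by (rule set_lebesgue_integral_cong) (use assms in \<open>auto simp: VaR_eq_quantile\<close>)
  then show ?thesis
    using assms unfolding ES_def by simp
qed

context
  fixes X :: "'a \<Rightarrow> real"
  assumes X: "integrable M X"
begin

lemma
  shows set_integrable_quantile_distr: "set_integrable lborel {0<..<1} (quantile (distr M borel X))"
    and set_integral_quantile_distr:
      "(LINT \<beta>:{0<..<1}|lborel. quantile (distr M borel X) \<beta>) = expectation X"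
proof -
  have meas: "X \<in> borel_measurable M"
    using X by simp
  have int: "integrable (distr M borel X) (\<lambda>x. x)"
    using X by (simp add: integrable_distr_eq)
  note law = cdf_distribution_distr[OF meas]
  show "set_integrable lborel {0<..<1} (quantile (distr M borel X))"
    by (rule cdf_distribution.set_integrable_quantile[OF law int])
  show "(LINT \<beta>:{0<..<1}|lborel. quantile (distr M borel X) \<beta>) = expectation X"
    using cdf_distribution.set_integral_quantile[OF law int] meas by (simp add: integral_distr)
qed

lemma ES_0_eq_expectation: "ES M 0 X = ereal (expectation X)"
  using ES_eq_upper_tail_mean[of X 0] X by (simp add: set_integral_quantile_distr)

lemma ES_le_VaR_1:
  assumes "0 \<le> \<alpha>" "\<alpha> \<le> 1"
  shows "ES M \<alpha> X \<le> VaR M 1 X"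
proof (cases "\<alpha> = 1")
  case False
  then have "\<alpha> < 1" using assms by simp
  show ?thesis
    unfolding VaR_def[of M 1]
  proof (rule Inf_greatest, clarify)
    fix x assume x: "1 \<le> measure M {\<omega> \<in> space M. X \<omega> \<le> x}"
    have "quantile (distr M borel X) \<beta> \<le> x" if "\<beta> \<in> {\<alpha><..<1}" for \<beta>
    proof -
      have "0 < \<beta>" "\<beta> < 1" using that assms by auto
      have "VaR M \<beta> X \<le> ereal x"
        unfolding VaR_def using x \<open>\<beta> < 1\<close> by (intro Inf_lower) auto
      then show ?thesis
        using X \<open>0 < \<beta>\<close> \<open>\<beta> < 1\<close> by (simp add: VaR_eq_quantile)
    qed
    then have "(LINT \<beta>:{\<alpha><..<1}|lborel. quantile (distr M borel X) \<beta>) / (1 - \<alpha>) \<le> x"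
      by (intro upper_tail_mean_le set_integrable_subset[OF set_integrable_quantile_distr])
         (use assms \<open>\<alpha> < 1\<close> in auto)
    then show "ES M \<alpha> X \<le> ereal x"
      using X assms \<open>\<alpha> < 1\<close> by (simp add: ES_eq_upper_tail_mean)
  qed
qed (simp add: ES_def)

lemma expectation_le_ES:
  assumes "0 \<le> \<alpha>" "\<alpha> \<le> 1"
  shows "ereal (expectation X) \<le> ES M \<alpha> X"
proof (cases "\<alpha> = 1")
  case True
  show ?thesis
    using ES_le_VaR_1[of 0] True unfolding ES_0_eq_expectation by (simp add: ES_def)
next
  case False
  then have "\<alpha> < 1" using assms by simp
  have "expectation X \<le> (LINT \<beta>:{\<alpha><..<1}|lborel. quantile (distr M borel X) \<beta>) / (1 - \<alpha>)"
    using mean_le_upper_tail_mean[OF _ set_integrable_quantile_distr assms(1) \<open>\<alpha> < 1\<close>]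
      cdf_distribution.mono_on_quantile[OF cdf_distribution_distr] X
    by (simp add: set_integral_quantile_distr)
  then show ?thesis
    using X assms \<open>\<alpha> < 1\<close> by (simp add: ES_eq_upper_tail_mean)
qed

lemma ES_bounded_below_1:
  assumes "a < 1"
  obtains B where "\<And>c. 0 \<le> c \<Longrightarrow> c \<le> a \<Longrightarrow> ES M c X \<le> ereal B"
proof
  fix c assume "0 \<le> c" "c \<le> a"
  then show "ES M c X \<le> ereal ((LINT \<beta>:{0<..<1}|lborel. \<bar>quantile (distr M borel X) \<beta>\<bar>) / (1 - a))"
    using upper_tail_mean_le_abs_integral[OF set_integrable_quantile_distr _ _ \<open>a < 1\<close>] X \<open>a < 1\<close>
    by (simp add: ES_eq_upper_tail_mean)
qed

end

end

lemma ES_Lambda_eq_infinity: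
  assumes "VaR M 1 X = \<infinity>" "\<And>x. \<Lambda> x = 1"
  shows "ES_Lambda M \<Lambda> X = \<infinity>"
proof (rule ereal_top)
  fix x
  have "ereal x = min (ES M (\<Lambda> x) X) (ereal x)"
    using assms by (simp add: ES_def)
  also have "\<dots> \<le> ES_Lambda M \<Lambda> X"
    unfolding ES_Lambda_def by (rule SUP_upper) simp
  finally show "ereal x \<le> ES_Lambda M \<Lambda> X" .
qed

lemma ES_Lambda_le_ereal:
  assumes "antimono \<Lambda>" "\<And>x. 0 \<le> \<Lambda> x"
    and bound: "\<And>c. 0 \<le> c \<Longrightarrow> c \<le> \<Lambda> x\<^sub>0 \<Longrightarrow> ES M c X \<le> ereal B"
  shows "ES_Lambda M \<Lambda> X \<le> ereal (max x\<^sub>0 B)"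
  unfolding ES_Lambda_def
proof (rule SUP_least)
  fix x
  show "min (ES M (\<Lambda> x) X) (ereal x) \<le> ereal (max x\<^sub>0 B)"
  proof (cases "x \<le> x\<^sub>0")
    case False
    then have "ES M (\<Lambda> x) X \<le> ereal B"
      using assms by (intro bound) (auto simp: antimonoD)
    then show ?thesis
      by (simp add: min_le_iff_disj le_max_iff_disj)
  qed (simp add: min_le_iff_disj le_max_iff_disj)
qed

lemma (in prob_space) ES_Lambda_less_infinity:
  assumes "integrable M X" "antimono \<Lambda>" "\<And>x. 0 \<le> \<Lambda> x" "\<Lambda> x\<^sub>0 < 1"
  shows "ES_Lambda M \<Lambda> X < \<infinity>"
proof -
  obtain B where "\<And>c. 0 \<le> c \<Longrightarrow> c \<le> \<Lambda> x\<^sub>0 \<Longrightarrow> ES M c X \<le> ereal B"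
    using ES_bounded_below_1[OF assms(1,4)] by blast
  then have "ES_Lambda M \<Lambda> X \<le> ereal (max x\<^sub>0 B)"
    by (rule ES_Lambda_le_ereal[OF assms(2,3)])
  then show ?thesis
    by (cases "ES_Lambda M \<Lambda> X") (auto simp: max_def)
qed

theorem proposition6:
  fixes M :: "'a measure" and \<Lambda> :: "real \<Rightarrow> real" and X :: "'a \<Rightarrow> real"
  assumes "prob_space M" and "atomless M"
    and "antimono \<Lambda>" and "\<forall>x. 0 \<le> \<Lambda> x \<and> \<Lambda> x \<le> 1"
    and "integrable M X"
  shows "(-\<infinity> < ereal (integral\<^sup>L M X) \<and> ereal (integral\<^sup>L M X) \<le> ES_Lambda M \<Lambda> X
           \<and> ES_Lambda M \<Lambda> X \<le> ES M 1 X)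
         \<and> (\<bar>ES_Lambda M \<Lambda> X\<bar> \<noteq> \<infinity> \<longleftrightarrow> (VaR M 1 X < \<infinity> \<or> \<not> (\<forall>x. \<Lambda> x = 1)))"
proof -
  interpret prob_space M by fact
  note X = \<open>integrable M X\<close>
  have \<Lambda>: "0 \<le> \<Lambda> x" "\<Lambda> x \<le> 1" for x
    using assms(4) by auto
  let ?E = "expectation X" and ?L = "ES_Lambda M \<Lambda> X"
  have "ereal ?E \<le> min (ES M (\<Lambda> ?E) X) (ereal ?E)"
    using expectation_le_ES[OF X \<Lambda>] by simp
  also have "\<dots> \<le> ?L"
    unfolding ES_Lambda_def by (rule SUP_upper) simp
  finally have lower: "ereal ?E \<le> ?L" .
  have upper: "?L \<le> VaR M 1 X"
    unfolding ES_Lambda_def using ES_le_VaR_1[OF X \<Lambda>] by (intro SUP_least min.coboundedI1)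
  have "?L < \<infinity>" if "\<Lambda> x \<noteq> 1" for x
    using \<Lambda>(2)[of x] that by (intro ES_Lambda_less_infinity[OF X assms(3) \<Lambda>(1), of x]) simp
  then have "?L < \<infinity> \<longleftrightarrow> VaR M 1 X < \<infinity> \<or> \<not> (\<forall>x. \<Lambda> x = 1)"
    using upper ES_Lambda_eq_infinity[of M X \<Lambda>] by (auto intro: le_less_trans)
  moreover have "\<bar>?L\<bar> \<noteq> \<infinity> \<longleftrightarrow> ?L < \<infinity>"
    using lower by (cases ?L) auto
  ultimately show ?thesis
    using lower upper by (simp add: ES_def)
qed

end
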